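(* For every pure context $F$, term $t$ and variable $x\notin\mathrm{fv}(F)$, we have $\langle (\lambda x.\langle F[x]\rangle)\,t\rangle \sim \langle F[t]\rangle$.
   Context: The calculus $\lambda_{\mathcal S}$. Terms: $t ::= x \mid \lambda x.t \mid t\,t \mid \mathcal{S}k.t \mid \langle t\rangle$ (shift and reset); values: $v ::= \lambda x.t \mid x$. $\lambda x.t$ binds $x$, $\mathcal{S}k.t$ binds $k$; terms up to $\alpha$-conversion; $\mathrm{fv}$ free variables; capture-avoiding substitution $t\{v/x\}$. Pure contexts $F ::= [\,] \mid v\,F \mid F\,t$; evaluation contexts $E ::= [\,] \mid v\,E \mid E\,t \mid \langle E\rangle$. Reduction: $E[(\lambda x.t)\,v] \to E[t\{v/x\}]$; $E[\langle F[\mathcal{S}k.t]\rangle] \to E[\langle t\{\lambda x.\langle F[x]\rangle/k\}\rangle]$ ($x\notin\mathrm{fv}(F)$); $E[\langle v\rangle]\to E[v]$. $t\Downarrow t'$ iff $t\to^*t'$ and $t'$ irreducible. Normal forms: values, control stuck terms $F[\mathcal{S}k.t]$, open stuck terms $E[x\,v]$. Fresh: not free in the terms/contexts considered. Normal form bisimilarity $\sim$: for a relation $\mathcal R$ on terms, $E_0\mathrel{\mathcal R}E_1$ iff either $E_0=E_0'[\langle F_0\rangle]$, $E_1=E_1'[\langle F_1\rangle]$ ($F_i$ pure) with $E_0'[x]\mathrel{\mathcal R}E_1'[x]$ and $\langle F_0[x]\rangle\mathrel{\mathcal R}\langle F_1[x]\rangle$ ($x$ fresh), or $E_0=F_0$,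 $E_1=F_1$ pure with $F_0[x]\mathrel{\mathcal R}F_1[x]$ ($x$ fresh). $v\mathbin{@}y$ is $x\,y$ if $v=x$, $t\{y/x\}$ if $v=\lambda x.t$. $\mathcal R^{\mathrm{nf}}$ on normal forms: $v_0\mathrel{\mathcal R^{\mathrm{nf}}}v_1$ if $v_0\mathbin{@}x\mathrel{\mathcal R}v_1\mathbin{@}x$ ($x$ fresh); $F_0[\mathcal{S}k.t_0]\mathrel{\mathcal R^{\mathrm{nf}}}F_1[\mathcal{S}k.t_1]$ if $F_0\mathrel{\mathcal R}F_1$ and $\langle t_0\rangle\mathrel{\mathcal R}\langle t_1\rangle$; $E_0[x\,v_0]\mathrel{\mathcal R^{\mathrm{nf}}}E_1[x\,v_1]$ if $E_0\mathrel{\mathcal R}E_1$ and $v_0\mathrel{\mathcal R^{\mathrm{nf}}}v_1$. $\mathcal R$ is a normal form simulation if $t_0\mathrel{\mathcal R}t_1$ and $t_0\Downarrow t_0'$ imply $t_1\Downarrow t_1'$ with $t_0'\mathrel{\mathcal R^{\mathrm{nf}}}t_1'$; a bisimulation if $\mathcal R$ and $\mathcal R^{-1}$ are simulations; $\sim$ is the largest normal form bisimulation. *)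

theory Defs
  imports Main
begin

section \<open>Terms of lambda_S (de Bruijn representation, so terms are taken up to alpha)\<close>

datatype trm = Var nat | Lam trm | App trm trm | Shift trm | Reset trm

text \<open>Shift (S k. t) binds k as index 0 of its body; Lam binds x as index 0.\<close>

fun lift :: "nat \<Rightarrow> trm \<Rightarrow> trm" where
  "lift k (Var i) = Var (if i < k then i else Suc i)"
| "lift k (Lam t) = Lam (lift (Suc k) t)"
| "lift k (App t u) = App (lift k t) (lift k u)"
| "lift k (Shift t) = Shift (lift (Suc k) t)"
| "lift k (Reset t) = Reset (lift k t)"

fun subst :: "trm \<Rightarrow> nat \<Rightarrow> trm \<Rightarrow> trm" where
  "subst (Var i) k s = (if i < k then Var i else if i = k then s else Var (i - 1))"
| "subst (Lam t) k s = Lam (subst t (Suc k) (lift 0 s))"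
| "subst (App t u) k s = App (subst t k s) (subst u k s)"
| "subst (Shift t) k s = Shift (subst t (Suc k) (lift 0 s))"
| "subst (Reset t) k s = Reset (subst t k s)"

fun is_val :: "trm \<Rightarrow> bool" where
  "is_val (Var _) = True"
| "is_val (Lam _) = True"
| "is_val _ = False"

datatype ctx = Hole | CArg trm ctx | CFun ctx trm | CReset ctx

fun plug :: "ctx \<Rightarrow> trm \<Rightarrow> trm" where
  "plug Hole t = t"
| "plug (CArg v E) t = App v (plug E t)"
| "plug (CFun E u) t = App (plug E t) u"
| "plug (CReset E) t = Reset (plug E t)"

fun is_ectx :: "ctx \<Rightarrow> bool" where
  "is_ectx Hole = True"
| "is_ectx (CArg v E) = (is_val v \<and> is_ectx E)"
| "is_ectx (CFun E u) = is_ectx E"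
| "is_ectx (CReset E) = is_ectx E"

fun is_pure :: "ctx \<Rightarrow> bool" where
  "is_pure Hole = True"
| "is_pure (CArg v E) = (is_val v \<and> is_pure E)"
| "is_pure (CFun E u) = is_pure E"
| "is_pure (CReset E) = False"

fun ctx_comp :: "ctx \<Rightarrow> ctx \<Rightarrow> ctx" where
  "ctx_comp Hole E' = E'"
| "ctx_comp (CArg v E) E' = CArg v (ctx_comp E E')"
| "ctx_comp (CFun E u) E' = CFun (ctx_comp E E') u"
| "ctx_comp (CReset E) E' = CReset (ctx_comp E E')"

fun lift_ctx :: "nat \<Rightarrow> ctx \<Rightarrow> ctx" where
  "lift_ctx k Hole = Hole"
| "lift_ctx k (CArg v E) = CArg (lift k v) (lift_ctx k E)"
| "lift_ctx k (CFun E u) = CFun (lift_ctx k E) (lift k u)"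
| "lift_ctx k (CReset E) = CReset (lift_ctx k E)"

text \<open>C[x] for a fresh variable x: shift all free indices of C and plug index 0.\<close>
definition plug_fresh :: "ctx \<Rightarrow> trm" where
  "plug_fresh C = plug (lift_ctx 0 C) (Var 0)"

inductive step :: "trm \<Rightarrow> trm \<Rightarrow> bool" where
  beta: "is_ectx E \<Longrightarrow> is_val v \<Longrightarrow>
           step (plug E (App (Lam t) v)) (plug E (subst t 0 v))"
| shift: "is_ectx E \<Longrightarrow> is_pure F \<Longrightarrow>
           step (plug E (Reset (plug F (Shift t))))
                (plug E (Reset (subst t 0 (Lam (Reset (plug_fresh F))))))"
| reset: "is_ectx E \<Longrightarrow> is_val v \<Longrightarrow>
           step (plug E (Reset v)) (plug E v)"

definition irreducible :: "trm \<Rightarrow> bool" where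
  "irreducible t \<longleftrightarrow> (\<nexists>u. step t u)"

definition eval :: "trm \<Rightarrow> trm \<Rightarrow> bool" where
  "eval t t' \<longleftrightarrow> step\<^sup>*\<^sup>* t t' \<and> irreducible t'"

text \<open>v @ y for a fresh variable y.\<close>
fun app_fresh :: "trm \<Rightarrow> trm" where
  "app_fresh (Var n) = App (Var (Suc n)) (Var 0)"
| "app_fresh (Lam t) = t"
| "app_fresh t = t"

definition ctx_rel :: "(trm \<Rightarrow> trm \<Rightarrow> bool) \<Rightarrow> ctx \<Rightarrow> ctx \<Rightarrow> bool" where
  "ctx_rel R E0 E1 \<longleftrightarrow>
     (\<exists>E0' F0 E1' F1. is_ectx E0' \<and> is_pure F0 \<and> is_ectx E1' \<and> is_pure F1 \<and>
        E0 = ctx_comp E0' (CReset F0) \<and> E1 = ctx_comp E1' (CReset F1) \<and>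
        R (plug_fresh E0') (plug_fresh E1') \<and>
        R (Reset (plug_fresh F0)) (Reset (plug_fresh F1)))
   \<or> (is_pure E0 \<and> is_pure E1 \<and> R (plug_fresh E0) (plug_fresh E1))"

definition val_rel :: "(trm \<Rightarrow> trm \<Rightarrow> bool) \<Rightarrow> trm \<Rightarrow> trm \<Rightarrow> bool" where
  "val_rel R v0 v1 \<longleftrightarrow> is_val v0 \<and> is_val v1 \<and> R (app_fresh v0) (app_fresh v1)"

definition nf_rel :: "(trm \<Rightarrow> trm \<Rightarrow> bool) \<Rightarrow> trm \<Rightarrow> trm \<Rightarrow> bool" where
  "nf_rel R a b \<longleftrightarrow>
     val_rel R a b
   \<or> (\<exists>F0 t0 F1 t1. is_pure F0 \<and> is_pure F1 \<and>
        a = plug F0 (Shift t0) \<and> b = plug F1 (Shift t1) \<and>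
        ctx_rel R F0 F1 \<and> R (Reset t0) (Reset t1))
   \<or> (\<exists>E0 x v0 E1 v1. is_ectx E0 \<and> is_ectx E1 \<and>
        a = plug E0 (App (Var x) v0) \<and> b = plug E1 (App (Var x) v1) \<and>
        ctx_rel R E0 E1 \<and> val_rel R v0 v1)"

definition nf_simulation :: "(trm \<Rightarrow> trm \<Rightarrow> bool) \<Rightarrow> bool" where
  "nf_simulation R \<longleftrightarrow>
     (\<forall>t0 t1 t0'. R t0 t1 \<longrightarrow> eval t0 t0' \<longrightarrow> (\<exists>t1'. eval t1 t1' \<and> nf_rel R t0' t1'))"

definition nf_bisimulation :: "(trm \<Rightarrow> trm \<Rightarrow> bool) \<Rightarrow> bool" where
  "nf_bisimulation R \<longleftrightarrow> nf_simulation R \<and> nf_simulation R\<inverse>\<inverse>"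

definition nf_bisimilar :: "trm \<Rightarrow> trm \<Rightarrow> bool" (infix "\<approx>nf" 50) where
  "t0 \<approx>nf t1 \<longleftrightarrow> (\<exists>R. nf_bisimulation R \<and> R t0 t1)"

end

theory Submission
  imports Defs
begin

text \<open>
  We exhibit a normal form bisimulation containing the pair. It is the closure under all
  term constructors of the pairs \<open>\<langle>(\<lambda>x.\<langle>F[x]\<rangle>) t\<rangle> \<sim> \<langle>G[t']\<rangle>\<close> (with \<open>F \<sim> G\<close>,
  \<open>t \<sim> t'\<close>), enlarged by \<open>\<langle>\<langle>t\<rangle>\<rangle> \<sim> \<langle>t'\<rangle>\<close> and \<open>\<langle>v\<rangle> \<sim> v'\<close>, which absorb the
  administrative reductions of the left-hand side once \<open>t\<close> has become a value. As long as
  \<open>t\<close> is not a value, both sides reduce \<open>t\<close> in place; a shift in \<open>t\<close> captures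
  \<open>(\<lambda>x.\<langle>F[x]\<rangle>) F'\<close> on the left and \<open>G[G']\<close> on the right, and these captured
  continuations are again related by the defining clause, now under a \<open>\<lambda>\<close>. Hence every
  step on one side is matched by finitely many steps on the other, and related normal forms
  are related by the normal form extension of the relation.
\<close>

lemma lift_lift: "i \<le> j \<Longrightarrow> lift (Suc j) (lift i t) = lift i (lift j t)"
  by (induction t arbitrary: i j) auto

lemma subst_lift: "subst (lift k t) k s = t"
  by (induction t arbitrary: k s) auto

lemma lift_subst: "j \<le> k \<Longrightarrow> lift j (subst t k s) = subst (lift j t) (Suc k) (lift j s)"
  by (induction t arbitrary: j k s) (auto simp: lift_lift)

fun subst_ctx :: "ctx \<Rightarrow> nat \<Rightarrow> trm \<Rightarrow> ctx" where
  "subst_ctx Hole k s = Hole"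
| "subst_ctx (CArg v E) k s = CArg (subst v k s) (subst_ctx E k s)"
| "subst_ctx (CFun E u) k s = CFun (subst_ctx E k s) (subst u k s)"
| "subst_ctx (CReset E) k s = CReset (subst_ctx E k s)"

lemma plug_ctx_comp [simp]: "plug (ctx_comp E E') t = plug E (plug E' t)"
  by (induction E) auto

lemma ctx_comp_assoc [simp]: "ctx_comp (ctx_comp A B) C = ctx_comp A (ctx_comp B C)"
  by (induction A) auto

lemma lift_plug [simp]: "lift k (plug E t) = plug (lift_ctx k E) (lift k t)"
  by (induction E) auto

lemma subst_plug [simp]: "subst (plug E t) k s = plug (subst_ctx E k s) (subst t k s)"
  by (induction E) auto

lemma size_plug: "size t \<le> size (plug E t)"
  by (induction E) auto

lemma lift_ctx_lift_ctx: "i \<le> j \<Longrightarrow> lift_ctx (Suc j) (lift_ctx i E) = lift_ctx i (lift_ctx j E)"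
  by (induction E) (auto simp: lift_lift)

lemma subst_ctx_lift_ctx: "subst_ctx (lift_ctx 0 E) (Suc k) (lift 0 s) = lift_ctx 0 (subst_ctx E k s)"
  by (induction E) (auto simp: lift_subst)

lemma subst_ctx_lift_ctx_cancel: "subst_ctx (lift_ctx k E) k s = E"
  by (induction E) (auto simp: subst_lift)

lemma lift_plug_fresh: "lift (Suc k) (plug_fresh F) = plug_fresh (lift_ctx k F)"
  by (simp add: plug_fresh_def lift_ctx_lift_ctx)

lemma subst_plug_fresh: "subst (plug_fresh F) (Suc k) (lift 0 s) = plug_fresh (subst_ctx F k s)"
  by (simp add: plug_fresh_def subst_ctx_lift_ctx)

lemma subst_plug_fresh_0: "subst (plug_fresh F) 0 s = plug F s"
  by (simp add: plug_fresh_def subst_ctx_lift_ctx_cancel)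

lemma plug_fresh_simps [simp]:
  "plug_fresh Hole = Var 0"
  "plug_fresh (CArg v E) = App (lift 0 v) (plug_fresh E)"
  "plug_fresh (CFun E u) = App (plug_fresh E) (lift 0 u)"
  "plug_fresh (CReset E) = Reset (plug_fresh E)"
  by (simp_all add: plug_fresh_def)

lemma plug_fresh_ctx_comp: "plug_fresh (ctx_comp C E) = plug (lift_ctx 0 C) (plug_fresh E)"
  by (induction C) auto

lemma is_val_lift [simp]: "is_val (lift k v) = is_val v"
  by (cases v) auto

lemma is_val_subst: "is_val v \<Longrightarrow> is_val s \<Longrightarrow> is_val (subst v k s)"
  by (cases v) auto

lemma pure_imp_ectx: "is_pure F \<Longrightarrow> is_ectx F"
  by (induction F) auto

lemma is_pure_ctx_comp [simp]: "is_pure (ctx_comp A B) = (is_pure A \<and> is_pure B)"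
  by (induction A) auto

lemma is_ectx_ctx_comp [simp]: "is_ectx (ctx_comp A B) = (is_ectx A \<and> is_ectx B)"
  by (induction A) auto

lemma is_val_plugD: "is_val (plug E t) \<Longrightarrow> E = Hole \<and> is_val t"
  by (cases E) auto

lemma pure_plug_Shift_not_val: "is_pure F \<Longrightarrow> \<not> is_val (plug F (Shift u))"
  by (cases F) auto

lemma pure_plug_Shift_neq_Reset: "is_pure F \<Longrightarrow> plug F (Shift u) \<noteq> Reset a"
  by (cases F) auto

text \<open>The side conditions on \<open>r\<close> hold for the stuck redexes \<open>x v\<close> and \<open>S k.u\<close>.\<close>
lemma pure_plug_decompose:
  assumes "is_pure G" "\<not> is_val x" "is_ectx E" "plug G x = plug E r" "\<not> is_val r"
    and "\<And>r1 r2. r = App r1 r2 \<Longrightarrow> is_val r1 \<and> is_val r2"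
  shows "\<exists>E'. E = ctx_comp G E' \<and> x = plug E' r \<and> is_ectx E'"
  using assms
proof (induction G arbitrary: E)
  case (CArg w G)
  show ?case
  proof (cases E)
    case (CArg w' E0)
    then show ?thesis using CArg.prems CArg.IH[of E0] by auto
  qed (use CArg.prems in \<open>auto dest: is_val_plugD\<close>)
next
  case (CFun G u)
  show ?case
  proof (cases E)
    case Hole
    then show ?thesis using CFun.prems by (metis is_val.simps(1) is_val_plugD plug.simps(1,3))
  next
    case (CFun E0 u')
    then show ?thesis using CFun.prems CFun.IH[of E0] by auto
  qed (use CFun.prems in \<open>auto dest: is_val_plugD\<close>)
qed auto

section \<open>Syntax-directed reduction\<close>

inductive red :: "trm \<Rightarrow> trm \<Rightarrow> bool" where
  red_AppL: "red a a' \<Longrightarrow> red (App a b) (App a' b)"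
| red_AppR: "is_val v \<Longrightarrow> red b b' \<Longrightarrow> red (App v b) (App v b')"
| red_beta: "is_val v \<Longrightarrow> red (App (Lam t) v) (subst t 0 v)"
| red_Reset: "red a a' \<Longrightarrow> red (Reset a) (Reset a')"
| red_Reset_val: "is_val v \<Longrightarrow> red (Reset v) v"
| red_shift: "is_pure F \<Longrightarrow>
    red (Reset (plug F (Shift t))) (Reset (subst t 0 (Lam (Reset (plug_fresh F)))))"

lemma red_plug: "is_ectx E \<Longrightarrow> red a b \<Longrightarrow> red (plug E a) (plug E b)"
  by (induction E) (auto intro: red.intros)

lemma step_plug:
  assumes "is_ectx E" "step a b"
  shows "step (plug E a) (plug E b)"
  using assms(2)
proof cases
  case (beta E0 v t)
  then show ?thesis using assms(1) step.beta[of "ctx_comp E E0" v t] by simp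
next
  case (shift E0 F t)
  then show ?thesis using assms(1) step.shift[of "ctx_comp E E0" F t] by simp
next
  case (reset E0 v)
  then show ?thesis using assms(1) step.reset[of "ctx_comp E E0" v] by simp
qed

lemma step_eq_red: "step = red"
proof (intro ext iffI)
  show "step a b \<Longrightarrow> red a b" for a b
    by (induction rule: step.induct) (auto intro: red_plug red.intros)
  show "red a b \<Longrightarrow> step a b" for a b
  proof (induction rule: red.induct)
    case (red_AppL a a' b)
    then show ?case using step_plug[of "CFun Hole b"] by simp
  next
    case (red_AppR v b b')
    then show ?case using step_plug[of "CArg v Hole"] by simp
  next
    case (red_beta v t)
    then show ?case using step.beta[of Hole v t] by simp
  next
    case (red_Reset a a')
    then show ?case using step_plug[of "CReset Hole"] by simp
  next
    case (red_Reset_val v)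
    then show ?case using step.reset[of Hole v] by simp
  next
    case (red_shift F t)
    then show ?case using step.shift[of Hole F t] by simp
  qed
qed

inductive_cases red_VarE [elim!]: "red (Var i) c"
inductive_cases red_LamE [elim!]: "red (Lam t) c"
inductive_cases red_ShiftE [elim!]: "red (Shift t) c"
inductive_cases red_AppE: "red (App a b) c"
inductive_cases red_ResetE: "red (Reset a) c"

lemma red_App_cases:
  "red (App a b) c \<Longrightarrow> (\<exists>a'. red a a' \<and> c = App a' b) \<or> (is_val a \<and> (\<exists>b'. red b b' \<and> c = App a b'))
    \<or> (\<exists>t. a = Lam t \<and> is_val b \<and> c = subst t 0 b)"
  by (erule red_AppE) auto

lemma red_Reset_cases:
  "red (Reset a) c \<Longrightarrow> (\<exists>a'. red a a' \<and> c = Reset a') \<or> (is_val a \<and> c = a)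
    \<or> (\<exists>F u. is_pure F \<and> a = plug F (Shift u) \<and> c = Reset (subst u 0 (Lam (Reset (plug_fresh F)))))"
  by (erule red_ResetE) auto

lemma val_red_free: "is_val v \<Longrightarrow> \<not> red v c"
  by (cases v) auto

lemma reds_plug: "red\<^sup>*\<^sup>* a b \<Longrightarrow> is_ectx E \<Longrightarrow> red\<^sup>*\<^sup>* (plug E a) (plug E b)"
  by (induction rule: rtranclp_induct) (auto intro: rtranclp.rtrancl_into_rtrancl red_plug)

lemma reds_AppL: "red\<^sup>*\<^sup>* a a' \<Longrightarrow> red\<^sup>*\<^sup>* (App a b) (App a' b)"
  using reds_plug[of a a' "CFun Hole b"] by simp

lemma reds_App:
  assumes "red\<^sup>*\<^sup>* a a'" "is_val a'" "red\<^sup>*\<^sup>* b b'"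
  shows "red\<^sup>*\<^sup>* (App a b) (App a' b')"
proof -
  have "red\<^sup>*\<^sup>* (App a' b) (App a' b')"
    using reds_plug[of b b' "CArg a' Hole"] assms(2,3) by simp
  with reds_AppL[OF assms(1)] show ?thesis by (rule rtranclp_trans)
qed

lemma reds_Reset: "red\<^sup>*\<^sup>* a b \<Longrightarrow> red\<^sup>*\<^sup>* (Reset a) (Reset b)"
  using reds_plug[of a b "CReset Hole"] by simp

lemma reds_Reset_App_Lam: "red\<^sup>*\<^sup>* a a' \<Longrightarrow> red\<^sup>*\<^sup>* (Reset (App (Lam t) a)) (Reset (App (Lam t) a'))"
  using reds_plug[of a a' "CReset (CArg (Lam t) Hole)"] by simp

lemma red_plug_pure_non_val:
  "is_pure G \<Longrightarrow> \<not> is_val x \<Longrightarrow> red (plug G x) c \<Longrightarrow> \<exists>x'. red x x' \<and> c = plug G x'"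
proof (induction G arbitrary: c)
  case (CArg w G)
  then show ?case by (auto elim!: red_AppE simp: val_red_free dest: is_val_plugD)
next
  case (CFun G u)
  then show ?case
    by (auto elim!: red_AppE dest: is_val_plugD) (metis is_val.simps(2) is_val_plugD)
qed auto

lemma beta_reset_plug_fresh:
  "is_val v \<Longrightarrow> red (Reset (App (Lam (Reset (plug_fresh F))) v)) (Reset (Reset (plug F v)))"
  using red_Reset[OF red_beta[of v "Reset (plug_fresh F)"]] by (simp add: subst_plug_fresh_0)

section \<open>Normal forms\<close>

definition stuck_ctrl :: "trm \<Rightarrow> bool" where
  "stuck_ctrl t \<longleftrightarrow> (\<exists>F u. is_pure F \<and> t = plug F (Shift u))"

definition stuck_open :: "trm \<Rightarrow> bool" where
  "stuck_open t \<longleftrightarrow> (\<exists>E x v. is_ectx E \<and> is_val v \<and> t = plug E (App (Var x) v))"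

lemma stuck_openI: "is_ectx E \<Longrightarrow> is_val v \<Longrightarrow> stuck_open (plug E (App (Var x) v))"
  unfolding stuck_open_def by blast

lemma stuck_open_plug: "stuck_open t \<Longrightarrow> is_ectx C \<Longrightarrow> stuck_open (plug C t)"
  unfolding stuck_open_def by (metis is_ectx_ctx_comp plug_ctx_comp)

lemma red_free_cases: "\<not> (\<exists>u. red t u) \<Longrightarrow> is_val t \<or> stuck_ctrl t \<or> stuck_open t"
proof (induction t)
  case (App a b)
  have a: "\<not> (\<exists>u. red a u)" using App.prems by (auto intro: red.intros)
  show ?case
  proof (cases "is_val a")
    case False
    with App.IH(1)[OF a] show ?thesis
    proof (elim disjE)
      assume "stuck_ctrl a"
      then show ?thesis unfolding stuck_ctrl_def by (metis is_pure.simps(3) plug.simps(3))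
    next
      assume "stuck_open a"
      then show ?thesis using stuck_open_plug[of a "CFun Hole b"] by simp
    qed simp
  next
    case True
    have b: "\<not> (\<exists>u. red b u)" using App.prems True by (auto intro: red.intros)
    from App.IH(2)[OF b] show ?thesis
    proof (elim disjE)
      assume "is_val b"
      then have "\<forall>t. a \<noteq> Lam t" using App.prems by (auto intro: red.intros)
      with True obtain x where "a = Var x" by (cases a) auto
      then show ?thesis using \<open>is_val b\<close> stuck_openI[of Hole b x] by simp
    next
      assume "stuck_ctrl b"
      then show ?thesis using True unfolding stuck_ctrl_def by (metis is_pure.simps(2) plug.simps(2))
    next
      assume "stuck_open b"
      then show ?thesis using True stuck_open_plug[of b "CArg a Hole"] by simp
    qed
  qed
next
  case (Reset a)
  have "\<not> (\<exists>u. red a u)" "\<not> is_val a" "\<not> stuck_ctrl a"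
    using Reset.prems by (auto simp: stuck_ctrl_def intro: red.intros)
  then have "stuck_open a" using Reset.IH by blast
  then show ?case using stuck_open_plug[of a "CReset Hole"] by simp
next
  case (Shift u)
  then show ?case unfolding stuck_ctrl_def by (metis is_pure.simps(1) plug.simps(1))
qed auto

lemma stuck_ctrl_red_free: "is_pure F \<Longrightarrow> \<not> red (plug F (Shift u)) c"
proof (induction F arbitrary: c)
  case (CArg v F)
  then show ?case by (auto elim!: red_AppE simp: val_red_free dest: is_val_plugD)
next
  case (CFun F w)
  then show ?case
    by (auto elim!: red_AppE dest: is_val_plugD) (metis pure_plug_Shift_not_val is_val.simps(2))
qed auto

lemma stuck_open_neq_stuck_ctrl:
  "is_ectx E \<Longrightarrow> is_val v \<Longrightarrow> is_pure F \<Longrightarrow> plug E (App (Var x) v) \<noteq> plug F (Shift t)"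
proof (induction E arbitrary: F)
  case Hole
  then show ?case
    by (cases F) (auto dest: pure_plug_Shift_not_val, metis pure_plug_Shift_not_val is_val.simps(1))
qed (case_tac F; auto dest: is_val_plugD)+

lemma stuck_open_red_free: "is_ectx E \<Longrightarrow> is_val v \<Longrightarrow> \<not> red (plug E (App (Var x) v)) c"
proof (induction E arbitrary: c)
  case Hole
  then show ?case by (auto elim!: red_AppE simp: val_red_free)
next
  case (CArg w E)
  then show ?case by (auto elim!: red_AppE simp: val_red_free dest: is_val_plugD)
next
  case (CFun E u)
  then show ?case
    by (auto elim!: red_AppE dest: is_val_plugD) (metis is_val.simps(2,3) is_val_plugD)
next
  case (CReset E)
  then show ?case by (auto elim!: red_ResetE dest: is_val_plugD stuck_open_neq_stuck_ctrl)
qed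

lemma irreducible_iff_red_free: "irreducible t \<longleftrightarrow> \<not> (\<exists>u. red t u)"
  by (simp add: irreducible_def step_eq_red)

lemma irreducible_iff_normal_form: "irreducible t \<longleftrightarrow> is_val t \<or> stuck_ctrl t \<or> stuck_open t"
  unfolding irreducible_iff_red_free
  using red_free_cases val_red_free stuck_ctrl_red_free stuck_open_red_free
  unfolding stuck_ctrl_def stuck_open_def by blast

section \<open>The candidate bisimulation\<close>

text \<open>\<open>cand_beta_ctx\<close> generalises the pair of the theorem to related contexts and arguments;
  \<open>cand_Reset_Reset\<close> and \<open>cand_Reset_val\<close> relate the reducts \<open>\<langle>\<langle>F[v]\<rangle>\<rangle>\<close> and \<open>\<langle>v\<rangle>\<close> of
  the left-hand side to the unreduced right-hand side.\<close>
inductive cand :: "trm \<Rightarrow> trm \<Rightarrow> bool" and cand_pure :: "ctx \<Rightarrow> ctx \<Rightarrow> bool" where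
  cand_Var: "cand (Var i) (Var i)"
| cand_Lam: "cand a b \<Longrightarrow> cand (Lam a) (Lam b)"
| cand_App: "cand a1 b1 \<Longrightarrow> cand a2 b2 \<Longrightarrow> cand (App a1 a2) (App b1 b2)"
| cand_Shift: "cand a b \<Longrightarrow> cand (Shift a) (Shift b)"
| cand_Reset: "cand a b \<Longrightarrow> cand (Reset a) (Reset b)"
| cand_beta_ctx: "cand_pure F G \<Longrightarrow> cand a b \<Longrightarrow>
    cand (Reset (App (Lam (Reset (plug_fresh F))) a)) (Reset (plug G b))"
| cand_Reset_Reset: "cand a b \<Longrightarrow> cand (Reset (Reset a)) (Reset b)"
| cand_Reset_val: "is_val a \<Longrightarrow> cand a b \<Longrightarrow> cand (Reset a) b"
| cand_pure_Hole: "cand_pure Hole Hole"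
| cand_pure_CArg: "is_val v \<Longrightarrow> is_val w \<Longrightarrow> cand v w \<Longrightarrow> cand_pure F G \<Longrightarrow>
    cand_pure (CArg v F) (CArg w G)"
| cand_pure_CFun: "cand_pure F G \<Longrightarrow> cand u u' \<Longrightarrow> cand_pure (CFun F u) (CFun G u')"

inductive_cases cand_pure_HoleE [elim!]: "cand_pure Hole G"
inductive_cases cand_pure_CArgE [elim!]: "cand_pure (CArg v F) G"
inductive_cases cand_pure_CFunE [elim!]: "cand_pure (CFun F u) G"
inductive_cases cand_pure_CResetE [elim!]: "cand_pure (CReset F) G"
inductive_cases cand_VarE [elim!]: "cand (Var i) b"
inductive_cases cand_LamE [elim!]: "cand (Lam a) b"
inductive_cases cand_ShiftE [elim!]: "cand (Shift a) b"
inductive_cases cand_AppE [elim!]: "cand (App a1 a2) b"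
inductive_cases cand_ResetE: "cand (Reset a) b"
inductive_cases cand_Var_rightE: "cand a (Var i)"
inductive_cases cand_Lam_rightE: "cand a (Lam b)"
inductive_cases cand_Shift_rightE: "cand a (Shift b)"
inductive_cases cand_App_rightE: "cand a (App b1 b2)"

lemma cand_val: "cand a b \<Longrightarrow> is_val a \<Longrightarrow> is_val b"
  by (cases a) auto

lemma cand_pure_is_pure: "cand_pure F G \<Longrightarrow> is_pure F \<and> is_pure G"
  by (induction F arbitrary: G) auto

lemma cand_Reset_cases:
  "cand (Reset a) b \<Longrightarrow> (\<exists>b0. b = Reset b0 \<and> cand a b0)
    \<or> (\<exists>F G a1 b1. a = App (Lam (Reset (plug_fresh F))) a1 \<and> b = Reset (plug G b1)
         \<and> cand_pure F G \<and> cand a1 b1)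
    \<or> (\<exists>a0 b0. a = Reset a0 \<and> b = Reset b0 \<and> cand a0 b0) \<or> (is_val a \<and> cand a b)"
  by (erule cand_ResetE) auto

lemma cand_App_right_cases: "cand a (App b1 b2) \<Longrightarrow> \<exists>a1 a2. a = App a1 a2 \<and> cand a1 b1 \<and> cand a2 b2"
  by (erule cand_App_rightE) (auto dest: cand_val)

lemma cand_refl: "cand t t"
  by (induction t) (auto intro: cand_cand_pure.intros)

lemma cand_pure_refl: "is_pure F \<Longrightarrow> cand_pure F F"
  by (induction F) (auto intro: cand_cand_pure.intros cand_refl)

lemma cand_plug: "cand_pure F G \<Longrightarrow> cand a b \<Longrightarrow> cand (plug F a) (plug G b)"
  by (induction F arbitrary: G) (auto intro!: cand_App)

lemma cand_lift: "cand a b \<Longrightarrow> cand (lift k a) (lift k b)"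
  and cand_pure_lift: "cand_pure F G \<Longrightarrow> cand_pure (lift_ctx k F) (lift_ctx k G)"
proof (induction arbitrary: k and k rule: cand_cand_pure.inducts)
  case (cand_beta_ctx F G a b)
  then show ?case
    using cand_cand_pure.cand_beta_ctx[of "lift_ctx k F" "lift_ctx k G" "lift k a" "lift k b"]
    by (simp add: lift_plug_fresh)
qed (auto intro: cand_cand_pure.intros)

lemma cand_subst:
  "cand a b \<Longrightarrow> cand v w \<Longrightarrow> is_val v \<Longrightarrow> is_val w \<Longrightarrow> cand (subst a k v) (subst b k w)"
  and cand_pure_subst:
  "cand_pure F G \<Longrightarrow> cand v w \<Longrightarrow> is_val v \<Longrightarrow> is_val w \<Longrightarrow>
    cand_pure (subst_ctx F k v) (subst_ctx G k w)"
proof (induction arbitrary: k v w and k v w rule: cand_cand_pure.inducts)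
  case (cand_beta_ctx F G a b)
  then show ?case
    using cand_cand_pure.cand_beta_ctx[of "subst_ctx F k v" "subst_ctx G k w" "subst a k v" "subst b k w"]
    by (simp add: subst_plug_fresh)
next
  case (cand_Lam a b)
  then show ?case by (simp add: cand_cand_pure.cand_Lam cand_lift)
next
  case (cand_Shift a b)
  then show ?case by (simp add: cand_cand_pure.cand_Shift cand_lift)
qed (auto intro: cand_cand_pure.intros is_val_subst)

lemma cand_plug_fresh: "cand_pure F G \<Longrightarrow> cand (plug_fresh F) (plug_fresh G)"
  unfolding plug_fresh_def by (auto intro: cand_plug cand_pure_lift cand_Var)

lemma cand_app_fresh: "cand v w \<Longrightarrow> is_val v \<Longrightarrow> cand (app_fresh v) (app_fresh w)"
  by (cases v) (auto intro: cand_refl)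

lemma cand_subst_Lam:
  "cand u u' \<Longrightarrow> cand (Lam k) (Lam k') \<Longrightarrow> cand (subst u n (Lam k)) (subst u' n (Lam k'))"
  by (simp add: cand_subst)

lemma cand_Lam_Reset_plug_fresh:
  "cand_pure F G \<Longrightarrow> cand (Lam (Reset (plug_fresh F))) (Lam (Reset (plug_fresh G)))"
  by (intro cand_Lam cand_Reset cand_plug_fresh)

lemma cand_beta_ctx_lift:
  "cand_pure F G \<Longrightarrow> cand p q \<Longrightarrow>
    cand (Reset (App (lift 0 (Lam (Reset (plug_fresh F)))) p)) (Reset (plug (lift_ctx 0 G) q))"
  by (auto simp: lift_plug_fresh intro: cand_beta_ctx cand_pure_lift)

text \<open>A shift inside the argument of \<open>\<langle>(\<lambda>x.\<langle>F[x]\<rangle>) F'[S k.u]\<rangle>\<close> captures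
  \<open>(\<lambda>x.\<langle>F[x]\<rangle>) F'\<close>, while on the right it captures \<open>G[G']\<close>; under the binder of the
  captured continuation these are again an instance of \<open>cand_beta_ctx\<close>.\<close>
lemma cand_Lam_Reset_captured:
  "cand_pure F G \<Longrightarrow> cand_pure F' G' \<Longrightarrow>
    cand (Lam (Reset (plug_fresh (CArg (Lam (Reset (plug_fresh F))) F'))))
         (Lam (Reset (plug_fresh (ctx_comp G G'))))"
  by (auto simp: plug_fresh_ctx_comp lift_plug_fresh
      intro!: cand_Lam cand_beta_ctx cand_pure_lift cand_plug_fresh)

lemma cand_val_backward: "cand a b \<Longrightarrow> is_val b \<Longrightarrow> \<exists>a'. red\<^sup>*\<^sup>* a a' \<and> is_val a' \<and> cand a' b"
proof (cases b)
  case (Var i)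
  assume "cand a b"
  then show ?thesis unfolding Var
    by (cases rule: cand_Var_rightE) (auto intro: cand_Var red.intros)
next
  case (Lam t)
  assume "cand a b"
  then show ?thesis unfolding Lam
    by (cases rule: cand_Lam_rightE) (auto intro: cand_cand_pure.intros red.intros)
qed auto

lemma cand_Lam_val_left: "cand a (Lam t') \<Longrightarrow> is_val a \<Longrightarrow> \<exists>t. a = Lam t \<and> cand t t'"
  by (cases a) auto

lemma cand_shift_forward:
  "is_pure F \<Longrightarrow> cand (plug F (Shift u)) b \<Longrightarrow>
    \<exists>G u'. b = plug G (Shift u') \<and> cand_pure F G \<and> cand u u'"
proof (induction F arbitrary: b)
  case Hole
  then show ?case by (auto intro!: cand_pure_Hole exI[of _ Hole])
next
  case (CArg v F)
  from CArg.prems obtain b1 b2 where b: "b = App b1 b2" "cand v b1" "cand (plug F (Shift u)) b2"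
    "is_val v" "is_pure F"
    by auto
  with CArg.IH obtain G u' where "b2 = plug G (Shift u')" "cand_pure F G" "cand u u'" by blast
  then show ?case using b cand_val by (intro exI[of _ "CArg b1 G"]) (auto intro: cand_pure_CArg)
next
  case (CFun F w)
  from CFun.prems obtain b1 b2 where b: "b = App b1 b2" "cand w b2" "cand (plug F (Shift u)) b1"
    "is_pure F"
    by auto
  with CFun.IH obtain G u' where "b1 = plug G (Shift u')" "cand_pure F G" "cand u u'" by blast
  then show ?case using b by (intro exI[of _ "CFun G b2"]) (auto intro: cand_pure_CFun)
qed auto

lemma cand_shift_backward:
  "is_pure G \<Longrightarrow> cand a (plug G (Shift u')) \<Longrightarrow>
    \<exists>F u. red\<^sup>*\<^sup>* a (plug F (Shift u)) \<and> cand_pure F G \<and> cand u u'"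
proof (induction G arbitrary: a)
  case Hole
  from Hole.prems(2) show ?case
    by (cases rule: cand_Shift_rightE) (auto intro!: cand_pure_Hole exI[of _ Hole] dest: cand_val)
next
  case (CArg w G)
  then obtain a1 a2 where a: "a = App a1 a2" "cand a1 w" "cand a2 (plug G (Shift u'))"
    using cand_App_right_cases by fastforce
  obtain a1' where a1: "red\<^sup>*\<^sup>* a1 a1'" "is_val a1'" "cand a1' w"
    using cand_val_backward[OF a(2)] CArg.prems by auto
  obtain F u where F: "red\<^sup>*\<^sup>* a2 (plug F (Shift u))" "cand_pure F G" "cand u u'"
    using CArg.IH[of a2] a(3) CArg.prems by auto
  show ?case using a a1 F CArg.prems reds_App[OF a1(1,2) F(1)]
    by (intro exI[of _ "CArg a1' F"] exI[of _ u]) (auto intro: cand_pure_CArg)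
next
  case (CFun G w)
  then obtain a1 a2 where a: "a = App a1 a2" "cand a2 w" "cand a1 (plug G (Shift u'))"
    using cand_App_right_cases by fastforce
  obtain F u where F: "red\<^sup>*\<^sup>* a1 (plug F (Shift u))" "cand_pure F G" "cand u u'"
    using CFun.IH[of a1] a(3) CFun.prems by auto
  show ?case using a F reds_AppL[OF F(1)]
    by (intro exI[of _ "CFun F a2"] exI[of _ u]) (auto intro: cand_pure_CFun)
qed simp

lemma ctx_rel_pureI:
  "is_pure E0 \<Longrightarrow> is_pure E1 \<Longrightarrow> R (plug_fresh E0) (plug_fresh E1) \<Longrightarrow> ctx_rel R E0 E1"
  by (simp add: ctx_rel_def)

lemma ctx_rel_resetI:
  "is_ectx E0 \<Longrightarrow> is_pure F0 \<Longrightarrow> is_ectx E1 \<Longrightarrow> is_pure F1 \<Longrightarrow>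
    R (plug_fresh E0) (plug_fresh E1) \<Longrightarrow> R (Reset (plug_fresh F0)) (Reset (plug_fresh F1)) \<Longrightarrow>
    ctx_rel R (ctx_comp E0 (CReset F0)) (ctx_comp E1 (CReset F1))"
  unfolding ctx_rel_def by blast

lemma ctx_rel_is_ectx: "ctx_rel R E0 E1 \<Longrightarrow> is_ectx E0 \<and> is_ectx E1"
  unfolding ctx_rel_def by (auto dest: pure_imp_ectx)

lemma ctx_rel_conversep: "ctx_rel R E0 E1 \<Longrightarrow> ctx_rel R\<inverse>\<inverse> E1 E0"
  unfolding ctx_rel_def by auto

lemma ctx_rel_frame:
  assumes "ctx_rel R E E'" "is_ectx C" "is_ectx C'"
    and outer: "\<And>X X'. R (plug_fresh X) (plug_fresh X') \<Longrightarrow>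
      R (plug_fresh (ctx_comp C X)) (plug_fresh (ctx_comp C' X'))"
    and pure: "\<And>X X'. is_pure X \<Longrightarrow> is_pure X' \<Longrightarrow> R (plug_fresh X) (plug_fresh X') \<Longrightarrow>
      ctx_rel R (ctx_comp C X) (ctx_comp C' X')"
  shows "ctx_rel R (ctx_comp C E) (ctx_comp C' E')"
  using assms(1) unfolding ctx_rel_def[of R E E']
proof (elim disjE exE conjE)
  fix E0 F0 E1 F1
  assume "is_ectx E0" "is_pure F0" "is_ectx E1" "is_pure F1"
    "E = ctx_comp E0 (CReset F0)" "E' = ctx_comp E1 (CReset F1)"
    "R (plug_fresh E0) (plug_fresh E1)" "R (Reset (plug_fresh F0)) (Reset (plug_fresh F1))"
  then show ?thesis
    using ctx_rel_resetI[of "ctx_comp C E0" F0 "ctx_comp C' E1" F1 R] assms(2,3) outer by simp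
qed (use pure in blast)

lemma ctx_rel_cand_CArg:
  assumes "ctx_rel cand E E'" "is_val v" "is_val v'" "cand v v'"
  shows "ctx_rel cand (CArg v E) (CArg v' E')"
  using ctx_rel_frame[OF assms(1), of "CArg v Hole" "CArg v' Hole"] assms
  by (simp add: ctx_rel_pureI cand_App cand_lift)

lemma ctx_rel_cand_CFun:
  assumes "ctx_rel cand E E'" "cand u u'"
  shows "ctx_rel cand (CFun E u) (CFun E' u')"
  using ctx_rel_frame[OF assms(1), of "CFun Hole u" "CFun Hole u'"] assms
  by (simp add: ctx_rel_pureI cand_App cand_lift)

lemma ctx_rel_cand_CReset:
  assumes "ctx_rel cand E E'"
  shows "ctx_rel cand (CReset E) (CReset E')"
proof -
  have "ctx_rel cand (ctx_comp (CReset Hole) E) (ctx_comp (CReset Hole) E')"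
  proof (rule ctx_rel_frame[OF assms])
    fix X X' assume "is_pure X" "is_pure X'" "cand (plug_fresh X) (plug_fresh X')"
    then show "ctx_rel cand (ctx_comp (CReset Hole) X) (ctx_comp (CReset Hole) X')"
      using ctx_rel_resetI[of Hole X Hole X' cand] by (auto intro: cand_Reset cand_Var)
  qed (auto intro: cand_Reset)
  then show ?thesis by simp
qed

lemma ctx_rel_cand_beta_ctx:
  assumes "ctx_rel cand E E'" "cand_pure F G"
  shows "ctx_rel cand (CReset (CArg (Lam (Reset (plug_fresh F))) E)) (CReset (ctx_comp G E'))"
proof -
  let ?L = "Lam (Reset (plug_fresh F))"
  have outer: "cand (Reset (plug_fresh (CArg ?L X))) (Reset (plug_fresh (ctx_comp G X')))"
    if "cand (plug_fresh X) (plug_fresh X')" for X X'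
    using cand_beta_ctx_lift[OF assms(2) that] by (simp add: plug_fresh_ctx_comp)
  have "ctx_rel cand (ctx_comp (CReset (CArg ?L Hole)) E) (ctx_comp (CReset G) E')"
  proof (rule ctx_rel_frame[OF assms(1)])
    fix X X' assume "is_pure X" "is_pure X'" "cand (plug_fresh X) (plug_fresh X')"
    then show "ctx_rel cand (ctx_comp (CReset (CArg ?L Hole)) X) (ctx_comp (CReset G) X')"
      using ctx_rel_resetI[of Hole "CArg ?L X" Hole "ctx_comp G X'" cand] outer
        cand_pure_is_pure[OF assms(2)]
      by (auto intro: cand_Var)
  qed (use outer cand_pure_is_pure[OF assms(2)] in \<open>auto intro: pure_imp_ectx\<close>)
  then show ?thesis by simp
qed

lemma ctx_rel_cand_Reset_Reset:
  assumes "ctx_rel cand E E'"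
  shows "ctx_rel cand (CReset (CReset E)) (CReset E')"
proof -
  have "ctx_rel cand (ctx_comp (CReset (CReset Hole)) E) (ctx_comp (CReset Hole) E')"
  proof (rule ctx_rel_frame[OF assms])
    fix X X' assume "is_pure X" "is_pure X'" "cand (plug_fresh X) (plug_fresh X')"
    then show "ctx_rel cand (ctx_comp (CReset (CReset Hole)) X) (ctx_comp (CReset Hole) X')"
      using ctx_rel_resetI[of "CReset Hole" X Hole X' cand] cand_Reset_val[of "Var 0", OF _ cand_Var]
      by (auto intro: cand_Reset)
  qed (auto intro: cand_Reset_Reset)
  then show ?thesis by simp
qed

lemma stuck_open_App_cases:
  assumes "stuck_open (App b1 b2)"
  shows "(\<exists>x. b1 = Var x \<and> is_val b2) \<or> (is_val b1 \<and> stuck_open b2) \<or> stuck_open b1"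
proof -
  obtain E x v where "is_ectx E" "is_val v" "App b1 b2 = plug E (App (Var x) v)"
    using assms unfolding stuck_open_def by blast
  then show ?thesis by (cases E) (auto intro: stuck_openI)
qed

lemma stuck_open_Reset:
  assumes "stuck_open (Reset b)"
  shows "stuck_open b"
proof -
  obtain E x v where "is_ectx E" "is_val v" "Reset b = plug E (App (Var x) v)"
    using assms unfolding stuck_open_def by blast
  then show ?thesis by (cases E) (auto intro: stuck_openI)
qed

lemma stuck_open_not_val: "stuck_open t \<Longrightarrow> \<not> is_val t"
  unfolding stuck_open_def by (auto dest: is_val_plugD)

lemma stuck_open_not_Shift: "\<not> stuck_open (Shift u)"
proof
  assume "stuck_open (Shift u)"
  then obtain E x v where "Shift u = plug E (App (Var x) v)"
    unfolding stuck_open_def by blast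
  then show False by (cases E) auto
qed

lemma cand_open_forward_Reset:
  assumes ab: "cand (Reset (plug E (App (Var x) v))) b" and E: "is_ectx E"
    and IH: "\<And>E0 b0. size E0 \<le> size E \<Longrightarrow> cand (plug E0 (App (Var x) v)) b0 \<Longrightarrow> is_ectx E0 \<Longrightarrow>
      \<exists>E' v'. b0 = plug E' (App (Var x) v') \<and> ctx_rel cand E0 E' \<and> cand v v' \<and> is_val v'"
  shows "\<exists>E' v'. b = plug E' (App (Var x) v') \<and> ctx_rel cand (CReset E) E' \<and> cand v v' \<and> is_val v'"
  using cand_Reset_cases[OF ab]
proof (elim disjE exE conjE)
  fix b0 assume h: "b = Reset b0" "cand (plug E (App (Var x) v)) b0"
  with IH[of E b0] E obtain E' v' where "b0 = plug E' (App (Var x) v')"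
    "ctx_rel cand E E'" "cand v v'" "is_val v'"
    by auto
  then show ?thesis using h ctx_rel_cand_CReset by (intro exI[of _ "CReset E'"]) auto
next
  fix F G a1 b1 assume h: "plug E (App (Var x) v) = App (Lam (Reset (plug_fresh F))) a1"
    "b = Reset (plug G b1)" "cand_pure F G" "cand a1 b1"
  from h(1) E obtain E1 where E1: "E = CArg (Lam (Reset (plug_fresh F))) E1"
    "a1 = plug E1 (App (Var x) v)" "is_ectx E1"
    by (cases E) (auto dest: is_val_plugD, metis is_val.simps(2,3) is_val_plugD)
  with IH[of E1 b1] h obtain E' v' where "b1 = plug E' (App (Var x) v')"
    "ctx_rel cand E1 E'" "cand v v'" "is_val v'"
    by auto
  then show ?thesis using h E1 ctx_rel_cand_beta_ctx
    by (intro exI[of _ "CReset (ctx_comp G E')"]) auto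
next
  fix a0 b0 assume h: "plug E (App (Var x) v) = Reset a0" "b = Reset b0" "cand a0 b0"
  from h(1) E obtain E1 where E1: "E = CReset E1" "a0 = plug E1 (App (Var x) v)" "is_ectx E1"
    by (cases E) auto
  with IH[of E1 b0] h obtain E' v' where "b0 = plug E' (App (Var x) v')"
    "ctx_rel cand E1 E'" "cand v v'" "is_val v'"
    by auto
  then show ?thesis using h E1 ctx_rel_cand_Reset_Reset
    by (intro exI[of _ "CReset E'"]) auto
qed (auto dest: is_val_plugD)

lemma cand_open_forward:
  "cand (plug E (App (Var x) v)) b \<Longrightarrow> is_ectx E \<Longrightarrow> is_val v \<Longrightarrow>
    \<exists>E' v'. b = plug E' (App (Var x) v') \<and> ctx_rel cand E E' \<and> cand v v' \<and> is_val v'"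
proof (induction E arbitrary: b rule: measure_induct_rule[of size])
  case (less E)
  have IH: "\<exists>E' v'. b = plug E' (App (Var x) v') \<and> ctx_rel cand E0 E' \<and> cand v v' \<and> is_val v'"
    if "size E0 < size E" "cand (plug E0 (App (Var x) v)) b" "is_ectx E0" for E0 b
    using less.IH that less.prems(3) by auto
  show ?case
  proof (cases E)
    case Hole
    then show ?thesis
      using less.prems cand_val by (auto intro!: exI[of _ Hole] ctx_rel_pureI cand_Var)
  next
    case (CArg w E0)
    with less.prems obtain b1 b2 where b: "b = App b1 b2" "cand w b1" "is_val w"
      "cand (plug E0 (App (Var x) v)) b2" "is_ectx E0"
      by auto
    with IH[of E0 b2] CArg obtain E' v' where "b2 = plug E' (App (Var x) v')" "ctx_rel cand E0 E'"
      "cand v v'" "is_val v'"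
      by auto
    then show ?thesis using b CArg cand_val ctx_rel_cand_CArg by (intro exI[of _ "CArg b1 E'"]) auto
  next
    case (CFun E0 u)
    with less.prems obtain b1 b2 where b: "b = App b1 b2" "cand u b2"
      "cand (plug E0 (App (Var x) v)) b1" "is_ectx E0"
      by auto
    with IH[of E0 b1] CFun obtain E' v' where "b1 = plug E' (App (Var x) v')" "ctx_rel cand E0 E'"
      "cand v v'" "is_val v'"
      by auto
    then show ?thesis using b CFun ctx_rel_cand_CFun by (intro exI[of _ "CFun E' b2"]) auto
  next
    case (CReset E0)
    then have "size E1 < size E" if "size E1 \<le> size E0" for E1 using that by simp
    then show ?thesis
      using cand_open_forward_Reset[of E0 x v b] IH less.prems CReset by auto
  qed
qed

lemma cand_open_backward_beta_ctx:
  assumes FG: "cand_pure F G" and a1b1: "cand a1 b1" and op: "stuck_open (plug G b1)"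
    and IH: "\<And>a b. size b \<le> size (plug G b1) \<Longrightarrow> cand a b \<Longrightarrow> stuck_open b \<Longrightarrow>
      \<exists>a'. red\<^sup>*\<^sup>* a a' \<and> stuck_open a' \<and> cand a' b"
  shows "\<exists>a'. red\<^sup>*\<^sup>* (Reset (App (Lam (Reset (plug_fresh F))) a1)) a' \<and> stuck_open a'
    \<and> cand a' (Reset (plug G b1))"
proof -
  let ?L = "Lam (Reset (plug_fresh F))"
  have pure: "is_pure F" "is_pure G" using cand_pure_is_pure[OF FG] by auto
  show ?thesis
  proof (cases "is_val b1")
    case True
    obtain a1' where a1': "red\<^sup>*\<^sup>* a1 a1'" "is_val a1'" "cand a1' b1"
      using cand_val_backward[OF a1b1 True] by auto
    have "cand (plug F a1') (plug G b1)" using cand_plug[OF FG a1'(3)] .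
    from IH[OF le_refl this op] obtain a0 where a0: "red\<^sup>*\<^sup>* (plug F a1') a0" "stuck_open a0"
      "cand a0 (plug G b1)"
      by blast
    have "red\<^sup>*\<^sup>* (Reset (App ?L a1)) (Reset (Reset (plug F a1')))"
      using reds_Reset_App_Lam[OF a1'(1)] beta_reset_plug_fresh[OF a1'(2)] by (rule rtranclp.rtrancl_into_rtrancl)
    also have "red\<^sup>*\<^sup>* \<dots> (Reset (Reset a0))" using reds_Reset[OF reds_Reset[OF a0(1)]] .
    finally show ?thesis
      using a0 stuck_open_plug[of a0 "CReset (CReset Hole)"] by (auto intro: cand_Reset_Reset)
  next
    case False
    from op obtain E0 x v where E0: "is_ectx E0" "is_val v" "plug G b1 = plug E0 (App (Var x) v)"
      unfolding stuck_open_def by blast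
    from pure_plug_decompose[OF pure(2) False E0(1,3)] E0(2) obtain E1
      where "b1 = plug E1 (App (Var x) v)" "is_ectx E1"
      by auto
    with E0 have "stuck_open b1" by (simp add: stuck_openI)
    from IH[OF size_plug a1b1 this] obtain a1' where a1': "red\<^sup>*\<^sup>* a1 a1'" "stuck_open a1'"
      "cand a1' b1"
      by blast
    then show ?thesis
      using reds_Reset_App_Lam[OF a1'(1)] stuck_open_plug[of a1' "CReset (CArg ?L Hole)"]
      by (auto intro: cand_beta_ctx FG)
  qed
qed

lemma cand_open_backward_App:
  assumes a1b1: "cand a1 b1" and a2b2: "cand a2 b2" and op: "stuck_open (App b1 b2)"
    and IH1: "stuck_open b1 \<Longrightarrow> \<exists>a'. red\<^sup>*\<^sup>* a1 a' \<and> stuck_open a' \<and> cand a' b1"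
    and IH2: "stuck_open b2 \<Longrightarrow> \<exists>a'. red\<^sup>*\<^sup>* a2 a' \<and> stuck_open a' \<and> cand a' b2"
  shows "\<exists>a'. red\<^sup>*\<^sup>* (App a1 a2) a' \<and> stuck_open a' \<and> cand a' (App b1 b2)"
proof -
  from stuck_open_App_cases[OF op] consider
      x where "b1 = Var x" "is_val b2" | "is_val b1" "stuck_open b2" | "stuck_open b1"
    by blast
  then show ?thesis
  proof cases
    case (1 x)
    obtain a1' where a1': "red\<^sup>*\<^sup>* a1 a1'" "is_val a1'" "cand a1' (Var x)"
      using cand_val_backward[OF a1b1] 1 by auto
    then have a1'_Var: "a1' = Var x" by (cases a1') auto
    obtain a2' where a2': "red\<^sup>*\<^sup>* a2 a2'" "is_val a2'" "cand a2' b2"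
      using cand_val_backward[OF a2b2] 1 by blast
    show ?thesis using reds_App[OF a1'(1,2) a2'(1)] a1'_Var a2' stuck_openI[of Hole a2' x] 1
      by (intro exI[of _ "App (Var x) a2'"]) (auto intro: cand_App cand_Var)
  next
    case 2
    obtain a1' where a1': "red\<^sup>*\<^sup>* a1 a1'" "is_val a1'" "cand a1' b1"
      using cand_val_backward[OF a1b1] 2 by blast
    obtain a2' where a2': "red\<^sup>*\<^sup>* a2 a2'" "stuck_open a2'" "cand a2' b2"
      using IH2 2 by blast
    show ?thesis using reds_App[OF a1'(1,2) a2'(1)] stuck_open_plug[of a2' "CArg a1' Hole"] a1' a2'
      by (auto intro: cand_App)
  next
    case 3
    obtain a1' where a1': "red\<^sup>*\<^sup>* a1 a1'" "stuck_open a1'" "cand a1' b1"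
      using IH1 3 by blast
    show ?thesis using reds_AppL[OF a1'(1)] stuck_open_plug[of a1' "CFun Hole a2"] a1' a2b2
      by (auto intro: cand_App)
  qed
qed

lemma cand_open_backward:
  "cand a b \<Longrightarrow> stuck_open b \<Longrightarrow> \<exists>a'. red\<^sup>*\<^sup>* a a' \<and> stuck_open a' \<and> cand a' b"
proof (induction b arbitrary: a rule: measure_induct_rule[of size])
  case (less b)
  from less.prems(1) show ?case
  proof cases
    case (cand_App a1 b1 a2 b2)
    then show ?thesis
      using cand_open_backward_App[OF cand_App(3,4)] less.IH[of b1 a1] less.IH[of b2 a2] less.prems(2)
      by simp
  next
    case (cand_Reset a0 b0)
    then obtain a0' where "red\<^sup>*\<^sup>* a0 a0'" "stuck_open a0'" "cand a0' b0"
      using less.IH[of b0 a0] less.prems(2) stuck_open_Reset by auto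
    then show ?thesis using cand_Reset stuck_open_plug[of a0' "CReset Hole"]
      by (auto intro: reds_Reset cand_cand_pure.cand_Reset)
  next
    case (cand_beta_ctx F G a1 b1)
    have "size (plug G b1) < size b" using cand_beta_ctx by simp
    then show ?thesis
      using cand_open_backward_beta_ctx[OF cand_beta_ctx(3,4)] less.IH less.prems(2) stuck_open_Reset
        cand_beta_ctx(1,2)
      by fastforce
  next
    case (cand_Reset_Reset a0 b0)
    then obtain a0' where "red\<^sup>*\<^sup>* a0 a0'" "stuck_open a0'" "cand a0' b0"
      using less.IH[of b0 a0] less.prems(2) stuck_open_Reset by auto
    then show ?thesis using cand_Reset_Reset stuck_open_plug[of a0' "CReset (CReset Hole)"]
      by (auto intro: reds_Reset cand_cand_pure.cand_Reset_Reset)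
  qed (use less.prems(2) in \<open>auto dest: stuck_open_not_val cand_val simp: stuck_open_not_Shift\<close>)
qed

section \<open>Simulation in both directions\<close>

lemma cand_reset_shift_forward:
  assumes "is_pure F" "cand (plug F (Shift u)) b"
  shows "\<exists>c. red (Reset b) (Reset c) \<and> cand (subst u 0 (Lam (Reset (plug_fresh F)))) c"
proof -
  from cand_shift_forward[OF assms] obtain G u' where
    G: "b = plug G (Shift u')" "cand_pure F G" "cand u u'"
    by blast
  have "red (Reset b) (Reset (subst u' 0 (Lam (Reset (plug_fresh G)))))"
    using G cand_pure_is_pure[OF G(2)] by (auto intro: red_shift)
  then show ?thesis using cand_subst_Lam[OF G(3) cand_Lam_Reset_plug_fresh[OF G(2)]] by blast
qed

lemma cand_reset_shift_backward:
  assumes "is_pure G" "cand a (plug G (Shift u'))"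
  shows "\<exists>c. red\<^sup>*\<^sup>* (Reset a) (Reset c) \<and> cand c (subst u' 0 (Lam (Reset (plug_fresh G))))"
proof -
  from cand_shift_backward[OF assms] obtain F u where
    F: "red\<^sup>*\<^sup>* a (plug F (Shift u))" "cand_pure F G" "cand u u'"
    by blast
  have "red\<^sup>*\<^sup>* (Reset a) (Reset (plug F (Shift u)))" using reds_Reset[OF F(1)] .
  also have "red (Reset (plug F (Shift u))) (Reset (subst u 0 (Lam (Reset (plug_fresh F)))))"
    using cand_pure_is_pure[OF F(2)] by (auto intro: red_shift)
  finally show ?thesis using cand_subst_Lam[OF F(3) cand_Lam_Reset_plug_fresh[OF F(2)]] by blast
qed

lemma cand_forward_beta_ctx:
  assumes FG: "cand_pure F G" and a1b1: "cand a1 b1"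
    and IH: "\<And>a1'. red a1 a1' \<Longrightarrow> \<exists>b1'. red\<^sup>*\<^sup>* b1 b1' \<and> cand a1' b1'"
    and red: "red (Reset (App (Lam (Reset (plug_fresh F))) a1)) a'"
  shows "\<exists>b'. red\<^sup>*\<^sup>* (Reset (plug G b1)) b' \<and> cand a' b'"
proof -
  let ?L = "Lam (Reset (plug_fresh F))"
  have pure: "is_pure F" "is_pure G" using cand_pure_is_pure[OF FG] by auto
  from red_Reset_cases[OF red] show ?thesis
  proof (elim disjE exE conjE)
    fix c assume c: "red (App ?L a1) c" "a' = Reset c"
    from red_App_cases[OF c(1)] show ?thesis
    proof (elim disjE exE conjE)
      fix a1' assume h: "red a1 a1'" "c = App ?L a1'"
      from IH[OF h(1)] obtain b1' where b1': "red\<^sup>*\<^sup>* b1 b1'" "cand a1' b1'" by blast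
      have "red\<^sup>*\<^sup>* (Reset (plug G b1)) (Reset (plug G b1'))"
        using reds_plug[OF b1'(1), of "CReset G"] pure pure_imp_ectx by simp
      then show ?thesis using c h b1' FG by (auto intro: cand_beta_ctx)
    next
      fix t assume "?L = Lam t" "is_val a1" "c = subst t 0 a1"
      then have "a' = Reset (Reset (plug F a1))" using c by (auto simp: subst_plug_fresh_0)
      then show ?thesis using cand_plug[OF FG a1b1] by (auto intro: cand_Reset_Reset)
    qed auto
  next
    fix F' u assume h: "is_pure F'" "App ?L a1 = plug F' (Shift u)"
      "a' = Reset (subst u 0 (Lam (Reset (plug_fresh F'))))"
    from h(1,2) obtain F3 where F3: "F' = CArg ?L F3" "a1 = plug F3 (Shift u)" "is_pure F3"
      by (cases F') (auto, metis pure_plug_Shift_not_val is_val.simps(2))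
    from cand_shift_forward[OF F3(3)] a1b1 F3(2) obtain G3 u' where
      G3: "b1 = plug G3 (Shift u')" "cand_pure F3 G3" "cand u u'"
      by blast
    have "red (Reset (plug G b1)) (Reset (subst u' 0 (Lam (Reset (plug_fresh (ctx_comp G G3))))))"
      using red_shift[of "ctx_comp G G3" u'] pure cand_pure_is_pure[OF G3(2)] G3(1) by simp
    moreover have "cand a' (Reset (subst u' 0 (Lam (Reset (plug_fresh (ctx_comp G G3))))))"
      unfolding h(3) F3(1)
      by (rule cand_Reset[OF cand_subst_Lam[OF G3(3) cand_Lam_Reset_captured[OF FG G3(2)]]])
    ultimately show ?thesis by blast
  qed simp
qed

lemma cand_forward_Reset_Reset:
  assumes a0b0: "cand a0 b0"
    and IH: "\<And>a0'. red a0 a0' \<Longrightarrow> \<exists>b0'. red\<^sup>*\<^sup>* b0 b0' \<and> cand a0' b0'"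
    and red: "red (Reset (Reset a0)) a'"
  shows "\<exists>b'. red\<^sup>*\<^sup>* (Reset b0) b' \<and> cand a' b'"
  using red_Reset_cases[OF red]
proof (elim disjE exE conjE)
  fix c assume h: "red (Reset a0) c" "a' = Reset c"
  from red_Reset_cases[OF h(1)] show ?thesis
  proof (elim disjE exE conjE)
    fix a0' assume h2: "red a0 a0'" "c = Reset a0'"
    from IH[OF h2(1)] obtain b0' where "red\<^sup>*\<^sup>* b0 b0'" "cand a0' b0'" by blast
    then show ?thesis using h h2 by (auto intro: reds_Reset cand_Reset_Reset)
  next
    assume "is_val a0" "c = a0"
    then show ?thesis using h a0b0 by (auto intro: cand_Reset)
  next
    fix F u assume h2: "is_pure F" "a0 = plug F (Shift u)"
      "c = Reset (subst u 0 (Lam (Reset (plug_fresh F))))"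
    from cand_reset_shift_forward[OF h2(1)] a0b0 h2(2) obtain c' where
      "red (Reset b0) (Reset c')" "cand (subst u 0 (Lam (Reset (plug_fresh F)))) c'"
      by blast
    then show ?thesis using h h2(3) by (blast intro: r_into_rtranclp cand_Reset_Reset)
  qed
qed (auto dest: pure_plug_Shift_neq_Reset[symmetric])

lemma cand_forward_App:
  assumes a1b1: "cand a1 b1" and a2b2: "cand a2 b2"
    and IH1: "\<And>a1'. red a1 a1' \<Longrightarrow> \<exists>b1'. red\<^sup>*\<^sup>* b1 b1' \<and> cand a1' b1'"
    and IH2: "\<And>a2'. red a2 a2' \<Longrightarrow> \<exists>b2'. red\<^sup>*\<^sup>* b2 b2' \<and> cand a2' b2'"
    and red: "red (App a1 a2) a'"
  shows "\<exists>b'. red\<^sup>*\<^sup>* (App b1 b2) b' \<and> cand a' b'"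
  using red_App_cases[OF red]
proof (elim disjE exE conjE)
  fix a1' assume h: "red a1 a1'" "a' = App a1' a2"
  from IH1[OF h(1)] obtain b1' where "red\<^sup>*\<^sup>* b1 b1'" "cand a1' b1'" by blast
  then show ?thesis using h a2b2 by (auto intro: reds_AppL cand_App)
next
  fix a2' assume h: "is_val a1" "red a2 a2'" "a' = App a1 a2'"
  from IH2[OF h(2)] obtain b2' where b2': "red\<^sup>*\<^sup>* b2 b2'" "cand a2' b2'" by blast
  have "is_val b1" using h(1) a1b1 cand_val by blast
  then show ?thesis using reds_App[OF rtranclp.rtrancl_refl _ b2'(1)] h b2' a1b1
    by (auto intro: cand_App)
next
  fix t assume h: "a1 = Lam t" "is_val a2" "a' = subst t 0 a2"
  then obtain t' where t': "b1 = Lam t'" "cand t t'" using a1b1 by auto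
  have "is_val b2" using a2b2 h cand_val by blast
  then have "red (App b1 b2) (subst t' 0 b2)" using t' by (auto intro: red_beta)
  then show ?thesis using h t' a2b2 \<open>is_val b2\<close>
    by (auto intro!: exI[of _ "subst t' 0 b2"] cand_subst)
qed

lemma cand_forward_step: "cand a b \<Longrightarrow> red a a' \<Longrightarrow> \<exists>b'. red\<^sup>*\<^sup>* b b' \<and> cand a' b'"
proof (induction arbitrary: a' rule: cand_cand_pure.inducts(1)[where ?P2.0="\<lambda>_ _. True"])
  case (cand_App a1 b1 a2 b2)
  then show ?case using cand_forward_App by blast
next
  case (cand_Reset a0 b0)
  from red_Reset_cases[OF cand_Reset.prems] show ?case
  proof (elim disjE exE conjE)
    fix a0' assume h: "red a0 a0'" "a' = Reset a0'"
    from cand_Reset.IH[OF h(1)] obtain b0' where "red\<^sup>*\<^sup>* b0 b0'" "cand a0' b0'" by blast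
    then show ?case using h by (auto intro: reds_Reset cand_cand_pure.cand_Reset)
  next
    assume "is_val a0" "a' = a0"
    then show ?case using cand_Reset.hyps by (blast intro: r_into_rtranclp red_Reset_val dest: cand_val)
  next
    fix F u assume h: "is_pure F" "a0 = plug F (Shift u)"
      "a' = Reset (subst u 0 (Lam (Reset (plug_fresh F))))"
    have "cand (plug F (Shift u)) b0" using cand_Reset h(2) by simp
    from cand_reset_shift_forward[OF h(1) this] obtain c where
      "red (Reset b0) (Reset c)" "cand (subst u 0 (Lam (Reset (plug_fresh F)))) c"
      by blast
    then show ?case using h(3) by (blast intro: r_into_rtranclp cand_cand_pure.cand_Reset)
  qed
next
  case (cand_beta_ctx F G a b)
  then show ?case using cand_forward_beta_ctx by blast
next
  case (cand_Reset_Reset a b)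
  then show ?case using cand_forward_Reset_Reset by blast
next
  case (cand_Reset_val a b)
  then have "a' = a"
    using red_Reset_cases[OF cand_Reset_val.prems] val_red_free pure_plug_Shift_not_val by blast
  then show ?case using cand_Reset_val.hyps by blast
qed auto

lemma cand_backward_Reset:
  assumes a0b0: "cand a0 b0"
    and IH: "\<And>a c. cand a b0 \<Longrightarrow> red b0 c \<Longrightarrow> \<exists>a'. red\<^sup>*\<^sup>* a a' \<and> cand a' c"
    and red: "red (Reset b0) b'"
  shows "\<exists>a'. red\<^sup>*\<^sup>* (Reset a0) a' \<and> cand a' b'"
  using red_Reset_cases[OF red]
proof (elim disjE exE conjE)
  fix c assume h: "red b0 c" "b' = Reset c"
  from IH[OF a0b0 h(1)] obtain a0' where "red\<^sup>*\<^sup>* a0 a0'" "cand a0' c" by blast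
  then show ?thesis using h by (auto intro: reds_Reset cand_Reset)
next
  assume h: "is_val b0" "b' = b0"
  obtain v where v: "red\<^sup>*\<^sup>* a0 v" "is_val v" "cand v b0"
    using cand_val_backward[OF a0b0 h(1)] by blast
  have "red\<^sup>*\<^sup>* (Reset a0) (Reset v)" using reds_Reset[OF v(1)] .
  also have "red (Reset v) v" using red_Reset_val[OF v(2)] .
  finally show ?thesis using v h by blast
next
  fix G u' assume h: "is_pure G" "b0 = plug G (Shift u')"
    "b' = Reset (subst u' 0 (Lam (Reset (plug_fresh G))))"
  obtain c where "red\<^sup>*\<^sup>* (Reset a0) (Reset c)" "cand c (subst u' 0 (Lam (Reset (plug_fresh G))))"
    using cand_reset_shift_backward[OF h(1)] a0b0 h(2) by blast
  then show ?thesis using h(3) by (blast intro: cand_Reset)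
qed

lemma cand_backward_Reset_Reset:
  assumes a0b0: "cand a0 b0"
    and IH: "\<And>a c. cand a b0 \<Longrightarrow> red b0 c \<Longrightarrow> \<exists>a'. red\<^sup>*\<^sup>* a a' \<and> cand a' c"
    and red: "red (Reset b0) b'"
  shows "\<exists>a'. red\<^sup>*\<^sup>* (Reset (Reset a0)) a' \<and> cand a' b'"
  using red_Reset_cases[OF red]
proof (elim disjE exE conjE)
  fix c assume h: "red b0 c" "b' = Reset c"
  from IH[OF a0b0 h(1)] obtain a0' where "red\<^sup>*\<^sup>* a0 a0'" "cand a0' c" by blast
  then show ?thesis using h by (auto intro: reds_Reset cand_Reset_Reset)
next
  assume h: "is_val b0" "b' = b0"
  obtain v where v: "red\<^sup>*\<^sup>* a0 v" "is_val v" "cand v b0"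
    using cand_val_backward[OF a0b0 h(1)] by blast
  have "red\<^sup>*\<^sup>* (Reset (Reset a0)) (Reset (Reset v))" using reds_Reset[OF reds_Reset[OF v(1)]] .
  also have "red (Reset (Reset v)) (Reset v)" using red_Reset[OF red_Reset_val[OF v(2)]] .
  also have "red (Reset v) v" using red_Reset_val[OF v(2)] .
  finally show ?thesis using v h by blast
next
  fix G u' assume h: "is_pure G" "b0 = plug G (Shift u')"
    "b' = Reset (subst u' 0 (Lam (Reset (plug_fresh G))))"
  obtain c where "red\<^sup>*\<^sup>* (Reset a0) (Reset c)" "cand c (subst u' 0 (Lam (Reset (plug_fresh G))))"
    using cand_reset_shift_backward[OF h(1)] a0b0 h(2) by blast
  then show ?thesis using h(3) reds_Reset by (blast intro: cand_Reset_Reset)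
qed

lemma cand_backward_App:
  assumes a1b1: "cand a1 b1" and a2b2: "cand a2 b2"
    and IH1: "\<And>a c. cand a b1 \<Longrightarrow> red b1 c \<Longrightarrow> \<exists>a'. red\<^sup>*\<^sup>* a a' \<and> cand a' c"
    and IH2: "\<And>a c. cand a b2 \<Longrightarrow> red b2 c \<Longrightarrow> \<exists>a'. red\<^sup>*\<^sup>* a a' \<and> cand a' c"
    and red: "red (App b1 b2) b'"
  shows "\<exists>a'. red\<^sup>*\<^sup>* (App a1 a2) a' \<and> cand a' b'"
  using red_App_cases[OF red]
proof (elim disjE exE conjE)
  fix b1' assume h: "red b1 b1'" "b' = App b1' b2"
  from IH1[OF a1b1 h(1)] obtain a1' where "red\<^sup>*\<^sup>* a1 a1'" "cand a1' b1'" by blast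
  then show ?thesis using h a2b2 by (auto intro: reds_AppL cand_App)
next
  fix b2' assume h: "is_val b1" "red b2 b2'" "b' = App b1 b2'"
  obtain v where v: "red\<^sup>*\<^sup>* a1 v" "is_val v" "cand v b1" using cand_val_backward a1b1 h(1) by blast
  from IH2[OF a2b2 h(2)] obtain a2' where "red\<^sup>*\<^sup>* a2 a2'" "cand a2' b2'" by blast
  then show ?thesis using reds_App[OF v(1,2)] v(3) h by (auto intro: cand_App)
next
  fix t' assume h: "b1 = Lam t'" "is_val b2" "b' = subst t' 0 b2"
  obtain v1 where v1: "red\<^sup>*\<^sup>* a1 v1" "is_val v1" "cand v1 b1" using cand_val_backward[OF a1b1] h by auto
  then obtain t where t: "v1 = Lam t" "cand t t'" using cand_Lam_val_left h(1) by blast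
  obtain v2 where v2: "red\<^sup>*\<^sup>* a2 v2" "is_val v2" "cand v2 b2" using cand_val_backward a2b2 h by blast
  have "red\<^sup>*\<^sup>* (App a1 a2) (App v1 v2)" using reds_App[OF v1(1,2) v2(1)] .
  also have "red (App v1 v2) (subst t 0 v2)" using t v2 by (auto intro: red_beta)
  finally show ?thesis using h t v2 by (auto intro!: cand_subst)
qed

lemma cand_reset_beta_ctx_shift_backward:
  assumes FG: "cand_pure F G" and G3: "is_pure G3" and a1b1: "cand a1 (plug G3 (Shift u'))"
  shows "\<exists>a'. red\<^sup>*\<^sup>* (Reset (App (Lam (Reset (plug_fresh F))) a1)) a'
    \<and> cand a' (Reset (subst u' 0 (Lam (Reset (plug_fresh (ctx_comp G G3))))))"
proof -
  let ?L = "Lam (Reset (plug_fresh F))"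
  from cand_shift_backward[OF G3 a1b1] obtain F3 u where
    F3: "red\<^sup>*\<^sup>* a1 (plug F3 (Shift u))" "cand_pure F3 G3" "cand u u'"
    by blast
  have "red\<^sup>*\<^sup>* (Reset (App ?L a1)) (Reset (App ?L (plug F3 (Shift u))))"
    using reds_Reset_App_Lam[OF F3(1)] .
  also have "red \<dots> (Reset (subst u 0 (Lam (Reset (plug_fresh (CArg ?L F3))))))"
    using red_shift[of "CArg ?L F3" u] cand_pure_is_pure[OF F3(2)] by simp
  finally show ?thesis
    using cand_subst_Lam[OF F3(3) cand_Lam_Reset_captured[OF FG F3(2)]] by (auto intro: cand_Reset)
qed

lemma cand_backward_beta_ctx:
  assumes FG: "cand_pure F G" and a1b1: "cand a1 b1"
    and IH: "\<And>a b c. size b \<le> size (plug G b1) \<Longrightarrow> cand a b \<Longrightarrow> red b c \<Longrightarrow>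
      \<exists>a'. red\<^sup>*\<^sup>* a a' \<and> cand a' c"
    and red: "red (Reset (plug G b1)) b'"
  shows "\<exists>a'. red\<^sup>*\<^sup>* (Reset (App (Lam (Reset (plug_fresh F))) a1)) a' \<and> cand a' b'"
proof -
  let ?L = "Lam (Reset (plug_fresh F))"
  have pure: "is_pure F" "is_pure G" using cand_pure_is_pure[OF FG] by auto
  show ?thesis
  proof (cases "is_val b1")
    case True
    obtain v where v: "red\<^sup>*\<^sup>* a1 v" "is_val v" "cand v b1"
      using cand_val_backward[OF a1b1 True] by blast
    have "red\<^sup>*\<^sup>* (Reset (App ?L a1)) (Reset (Reset (plug F v)))"
      using reds_Reset_App_Lam[OF v(1)] beta_reset_plug_fresh[OF v(2)] by (rule rtranclp.rtrancl_into_rtrancl)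
    moreover obtain a' where "red\<^sup>*\<^sup>* (Reset (Reset (plug F v))) a'" "cand a' b'"
      using cand_backward_Reset_Reset[OF cand_plug[OF FG v(3)] IH[OF le_refl] red] by blast
    ultimately show ?thesis by (blast intro: rtranclp_trans)
  next
    case False
    from red_Reset_cases[OF red] show ?thesis
    proof (elim disjE exE conjE)
      fix c assume h: "red (plug G b1) c" "b' = Reset c"
      from red_plug_pure_non_val[OF pure(2) False h(1)] obtain b1' where
        b1': "red b1 b1'" "c = plug G b1'"
        by blast
      from IH[OF size_plug a1b1 b1'(1)] obtain a1' where "red\<^sup>*\<^sup>* a1 a1'" "cand a1' b1'" by blast
      then show ?thesis using reds_Reset_App_Lam h b1' FG by (auto intro: cand_beta_ctx)
    next
      assume "is_val (plug G b1)" then show ?thesis using False is_val_plugD by blast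
    next
      fix G' u' assume h: "is_pure G'" "plug G b1 = plug G' (Shift u')"
        "b' = Reset (subst u' 0 (Lam (Reset (plug_fresh G'))))"
      obtain G3 where G3: "G' = ctx_comp G G3" "b1 = plug G3 (Shift u')"
        using pure_plug_decompose[OF pure(2) False pure_imp_ectx[OF h(1)] h(2)] by auto
      have "is_pure G3" using h(1) G3(1) by simp
      then show ?thesis using cand_reset_beta_ctx_shift_backward[OF FG] a1b1 G3 h(3) by blast
    qed
  qed
qed

lemma cand_backward_step: "cand a b \<Longrightarrow> red b b' \<Longrightarrow> \<exists>a'. red\<^sup>*\<^sup>* a a' \<and> cand a' b'"
proof (induction b arbitrary: a b' rule: measure_induct_rule[of size])
  case (less b)
  have IH: "\<And>a c. cand a b0 \<Longrightarrow> red b0 c \<Longrightarrow> \<exists>a'. red\<^sup>*\<^sup>* a a' \<and> cand a' c"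
    if "size b0 < size b" for b0
    using less.IH that by blast
  from less.prems(1) show ?case
  proof cases
    case (cand_App a1 b1 a2 b2)
    then have size_b: "size b1 < size b" "size b2 < size b" by auto
    show ?thesis
      using cand_backward_App[OF cand_App(3,4) IH[OF size_b(1)] IH[OF size_b(2)]] less.prems(2) cand_App(1,2) by simp
  next
    case (cand_Reset a0 b0)
    then have size_b0: "size b0 < size b" by simp
    show ?thesis using cand_backward_Reset[OF cand_Reset(3) IH[OF size_b0]] less.prems(2) cand_Reset(1,2)
      by simp
  next
    case (cand_beta_ctx F G a1 b1)
    then have size_b0: "size b0 < size b" if "size b0 \<le> size (plug G b1)" for b0
      using that by simp
    show ?thesis using cand_backward_beta_ctx[OF cand_beta_ctx(3,4) IH[OF size_b0]] less.prems(2) cand_beta_ctx(1,2)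
      by simp
  next
    case (cand_Reset_Reset a0 b0)
    then have size_b0: "size b0 < size b" by simp
    show ?thesis using cand_backward_Reset_Reset[OF cand_Reset_Reset(3) IH[OF size_b0]] less.prems(2)
        cand_Reset_Reset(1,2)
      by simp
  qed (use less.prems in \<open>auto dest: cand_val simp: val_red_free\<close>)
qed

lemma nf_rel_valI: "val_rel R a b \<Longrightarrow> nf_rel R a b"
  unfolding nf_rel_def by blast

lemma nf_rel_ctrlI:
  "is_pure F0 \<Longrightarrow> is_pure F1 \<Longrightarrow> ctx_rel R F0 F1 \<Longrightarrow> R (Reset t0) (Reset t1) \<Longrightarrow>
    nf_rel R (plug F0 (Shift t0)) (plug F1 (Shift t1))"
  unfolding nf_rel_def by blast

lemma nf_rel_openI:
  "is_ectx E0 \<Longrightarrow> is_ectx E1 \<Longrightarrow> ctx_rel R E0 E1 \<Longrightarrow> val_rel R v0 v1 \<Longrightarrow>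
    nf_rel R (plug E0 (App (Var x) v0)) (plug E1 (App (Var x) v1))"
  unfolding nf_rel_def by blast

lemma nf_rel_conversep: "nf_rel R a b \<Longrightarrow> nf_rel R\<inverse>\<inverse> b a"
  unfolding nf_rel_def val_rel_def by (blast dest: ctx_rel_conversep)

lemma cand_nf_forward:
  assumes ab: "cand a b" and irr: "irreducible a"
  shows "irreducible b \<and> nf_rel cand a b"
proof -
  from irr consider "is_val a" | "stuck_ctrl a" | "stuck_open a"
    unfolding irreducible_iff_normal_form by blast
  then show ?thesis
  proof cases
    case 1
    then have "is_val b" using cand_val ab by blast
    then show ?thesis using 1 ab cand_app_fresh[OF ab 1]
      by (simp add: irreducible_iff_normal_form val_rel_def nf_rel_valI)
  next
    case 2
    then obtain F u where F: "is_pure F" "a = plug F (Shift u)" by (auto simp: stuck_ctrl_def)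
    from cand_shift_forward[OF F(1)] ab F(2) obtain G u' where
      G: "b = plug G (Shift u')" "cand_pure F G" "cand u u'"
      by blast
    have "is_pure G" using cand_pure_is_pure[OF G(2)] by blast
    then have "stuck_ctrl b" using G(1) by (auto simp: stuck_ctrl_def)
    then show ?thesis using F G \<open>is_pure G\<close>
      by (auto simp: irreducible_iff_normal_form
          intro!: nf_rel_ctrlI ctx_rel_pureI cand_plug_fresh cand_Reset)
  next
    case 3
    then obtain E x v where E: "is_ectx E" "is_val v" "a = plug E (App (Var x) v)"
      by (auto simp: stuck_open_def)
    from cand_open_forward[OF _ E(1,2)] ab E(3) obtain E' v' where
      E': "b = plug E' (App (Var x) v')" "ctx_rel cand E E'" "cand v v'" "is_val v'"
      by blast
    have "is_ectx E'" using ctx_rel_is_ectx[OF E'(2)] by blast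
    then have "stuck_open b" using E'(1,4) by (simp add: stuck_openI)
    then show ?thesis using E E' \<open>is_ectx E'\<close>
      by (auto simp: irreducible_iff_normal_form val_rel_def intro!: nf_rel_openI cand_app_fresh)
  qed
qed

lemma cand_nf_backward:
  assumes ab: "cand a b" and irr: "irreducible b"
  shows "\<exists>a'. red\<^sup>*\<^sup>* a a' \<and> irreducible a' \<and> cand a' b"
proof -
  from irr consider "is_val b" | "stuck_ctrl b" | "stuck_open b"
    unfolding irreducible_iff_normal_form by blast
  then show ?thesis
  proof cases
    case 1
    then show ?thesis using cand_val_backward[OF ab] by (auto simp: irreducible_iff_normal_form)
  next
    case 2
    then obtain G u' where G: "is_pure G" "b = plug G (Shift u')" by (auto simp: stuck_ctrl_def)
    from cand_shift_backward[OF G(1)] ab G(2) obtain F u where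
      F: "red\<^sup>*\<^sup>* a (plug F (Shift u))" "cand_pure F G" "cand u u'"
      by blast
    have "stuck_ctrl (plug F (Shift u))"
      using cand_pure_is_pure[OF F(2)] by (auto simp: stuck_ctrl_def)
    then show ?thesis using F G(2) cand_plug[OF F(2) cand_Shift[OF F(3)]]
      by (auto simp: irreducible_iff_normal_form)
  next
    case 3
    then show ?thesis using cand_open_backward[OF ab] by (auto simp: irreducible_iff_normal_form)
  qed
qed

lemma eval_iff_reds: "eval t t' \<longleftrightarrow> red\<^sup>*\<^sup>* t t' \<and> irreducible t'"
  by (simp add: eval_def step_eq_red)

lemma cand_eval_forward:
  "red\<^sup>*\<^sup>* t0 t0' \<Longrightarrow> irreducible t0' \<Longrightarrow> cand t0 t1 \<Longrightarrow>
    \<exists>t1'. red\<^sup>*\<^sup>* t1 t1' \<and> irreducible t1' \<and> nf_rel cand t0' t1'"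
proof (induction arbitrary: t1 rule: converse_rtranclp_induct)
  case base
  then show ?case using cand_nf_forward by blast
next
  case (step t0 s)
  from cand_forward_step[OF step.prems(2) step.hyps(1)] obtain t1s where
    "red\<^sup>*\<^sup>* t1 t1s" "cand s t1s"
    by blast
  with step.IH[OF step.prems(1)] show ?case by (blast intro: rtranclp_trans)
qed

lemma cand_eval_backward:
  "red\<^sup>*\<^sup>* t0 t0' \<Longrightarrow> irreducible t0' \<Longrightarrow> cand t1 t0 \<Longrightarrow>
    \<exists>t1'. red\<^sup>*\<^sup>* t1 t1' \<and> irreducible t1' \<and> nf_rel cand\<inverse>\<inverse> t0' t1'"
proof (induction arbitrary: t1 rule: converse_rtranclp_induct)
  case base
  from cand_nf_backward[OF base.prems(2,1)] obtain t1' where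
    t1': "red\<^sup>*\<^sup>* t1 t1'" "irreducible t1'" "cand t1' t0'"
    by blast
  then show ?case using cand_nf_forward[OF t1'(3,2)] nf_rel_conversep by blast
next
  case (step t0 s)
  from cand_backward_step[OF step.prems(2) step.hyps(1)] obtain t1s where
    "red\<^sup>*\<^sup>* t1 t1s" "cand t1s s"
    by blast
  with step.IH[OF step.prems(1)] show ?case by (blast intro: rtranclp_trans)
qed

lemma nf_bisimulation_cand: "nf_bisimulation cand"
  unfolding nf_bisimulation_def nf_simulation_def eval_iff_reds
  using cand_eval_forward cand_eval_backward by auto

theorem proposition5:
  fixes F :: ctx and t :: trm
  assumes "is_pure F"
  shows "Reset (App (Lam (Reset (plug_fresh F))) t) \<approx>nf Reset (plug F t)"
  unfolding nf_bisimilar_def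
  using nf_bisimulation_cand cand_beta_ctx[OF cand_pure_refl[OF assms] cand_refl] by blast

end
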